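(* Let $\alpha<\tfrac12$. For every $k\in\mathbb N$ and every $\varepsilon>0$, $\widetilde\varphi_k(x)=O(x^\varepsilon)$ as $x\to\infty$.
   Context: $\mathrm m(x):=x^{1-4\alpha}e^{-1/(2x^2)}$ for $x>0$. The canonical $*$-moment functions are defined recursively by $\widetilde\varphi_{-1}:\equiv0$, $\widetilde\varphi_0:\equiv1$ and, for $k\in\mathbb N$ and $x\ge0$, $$\widetilde\varphi_k(x):=4k\int_0^x\frac1{y^2\mathrm m(y)}\int_0^y\mathrm m(\xi)\bigl[(1-2\alpha)\widetilde\varphi_{k-1}(\xi)+(k-1)\widetilde\varphi_{k-2}(\xi)\bigr]d\xi\,dy.$$ *)

theory Defs
  imports "HOL-Analysis.Analysis" "HOL-Library.Landau_Symbols"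
begin

definition mw :: "real \<Rightarrow> real \<Rightarrow> real" where
  "mw \<alpha> x = x powr (1 - 4*\<alpha>) * exp (- 1 / (2 * x^2))"

definition phi_step :: "real \<Rightarrow> nat \<Rightarrow> (real \<Rightarrow> real) \<Rightarrow> (real \<Rightarrow> real) \<Rightarrow> real \<Rightarrow> real" where
  "phi_step \<alpha> k f g x =
     4 * real k * integral {0..x} (\<lambda>y. (1 / (y^2 * mw \<alpha> y)) *
        integral {0..y} (\<lambda>\<xi>. mw \<alpha> \<xi> * ((1 - 2*\<alpha>) * f \<xi> + real (k - 1) * g \<xi>)))"

text \<open>Canonical *-moment functions: phit a k = \<phi>~_k, with \<phi>~_(-1) = 0, \<phi>~_0 = 1.\<close>
fun phit :: "real \<Rightarrow> nat \<Rightarrow> real \<Rightarrow> real" where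
  "phit \<alpha> 0 = (\<lambda>x. 1)"
| "phit \<alpha> (Suc 0) = phi_step \<alpha> 1 (\<lambda>x. 1) (\<lambda>x. 0)"
| "phit \<alpha> (Suc (Suc k)) = phi_step \<alpha> (Suc (Suc k)) (phit \<alpha> (Suc k)) (phit \<alpha> k)"

end

theory Submission
  imports Defs
begin

text \<open>Write G_p(x) = x^p exp(-1/(2x^2)); the weight m is G_q with q = 1 - 4\<alpha> > -1.
  Since G_p' = p G_(p-1) + G_(p-3) with both terms nonnegative, integrating over [0,y] gives
  \<integral>_0^y m \<le> y m(y) / (q+1) and \<integral>_0^y m \<le> y^3 m(y), hence \<integral>_0^y m / (y^2 m(y)) \<le> K / (1+y).
  So bounds C (1+x)^\<delta> on the two previous functions of the recursion give the bound
  C' \<integral>_0^x (1+y)^(\<delta>-1) dy \<le> C' (1+x)^\<delta> / \<delta> on the next one, for every \<delta> > 0.\<close>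

definition damped_powr :: "real \<Rightarrow> real \<Rightarrow> real" where
  "damped_powr p x = x powr p * exp (- 1 / (2 * x^2))"

lemma mw_eq_damped_powr: "mw \<alpha> = damped_powr (1 - 4*\<alpha>)"
  by (simp add: fun_eq_iff mw_def damped_powr_def)

lemma damped_powr_nonneg: "x \<ge> 0 \<Longrightarrow> damped_powr p x \<ge> 0"
  by (simp add: damped_powr_def)

lemma damped_powr_pos: "x > 0 \<Longrightarrow> damped_powr p x > 0"
  by (simp add: damped_powr_def)

lemma damped_powr_zero [simp]: "damped_powr p 0 = 0"
  by (simp add: damped_powr_def)

lemma damped_powr_add_nat:
  assumes "x > 0"
  shows "damped_powr (p + real n) x = x ^ n * damped_powr p x"
  using assms by (simp add: damped_powr_def powr_add powr_realpow)

lemma tendsto_damped_powr_at_right_0: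
  assumes "p > 0"
  shows "(damped_powr p \<longlongrightarrow> 0) (at_right 0)"
proof (rule Lim_null_comparison)
  show "\<forall>\<^sub>F x in at_right 0. norm (damped_powr p x) \<le> x powr p"
    by (rule eventually_at_rightI[of 0 1]) (auto simp: damped_powr_def mult_left_le)
  show "((\<lambda>x::real. x powr p) \<longlongrightarrow> 0) (at_right 0)"
    by (rule tendsto_zero_powrI[OF _ tendsto_const _ assms])
       (auto intro: tendsto_ident_at eventually_at_rightI[of 0 1])
qed

lemma continuous_on_damped_powr:
  assumes "p > 0"
  shows "continuous_on {0..} (damped_powr p)"
proof -
  have "continuous (at x within {0..}) (damped_powr p)" if "x \<ge> 0" for x
  proof (cases "x = 0")
    case True
    then show ?thesis
      using tendsto_damped_powr_at_right_0[OF assms]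
      by (simp add: continuous_within at_within_Ici_at_right)
  next
    case False
    with that have "isCont (damped_powr p) x"
      unfolding damped_powr_def by (intro continuous_intros) auto
    then show ?thesis
      using continuous_at_imp_continuous_at_within by blast
  qed
  then show ?thesis
    using continuous_on_eq_continuous_within by blast
qed

lemma has_real_derivative_damped_powr:
  assumes "x > 0"
  shows "(damped_powr p has_real_derivative p * damped_powr (p - 1) x + damped_powr (p - 3) x) (at x)"
proof -
  have "((\<lambda>x. - 1 / (2 * x^2)) has_real_derivative 1 / x^3) (at x)"
    using assms by (auto intro!: derivative_eq_intros simp: field_simps power2_eq_square power3_eq_cube)
  from DERIV_mult[OF has_real_derivative_powr[OF assms, of p] DERIV_chain2[OF DERIV_exp this]]
  have "((\<lambda>x. x powr p * exp (- 1 / (2 * x^2))) has_real_derivative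
          p * x powr (p - 1) * exp (- 1 / (2 * x^2)) + x powr p / x^3 * exp (- 1 / (2 * x^2))) (at x)"
    by (simp add: algebra_simps)
  moreover have "x powr p / x^3 = x powr (p - 3)"
    using assms by (simp add: powr_diff powr_realpow)
  ultimately show ?thesis
    by (simp add: damped_powr_def[abs_def] mult.assoc)
qed

lemma has_integral_damped_powr_deriv:
  assumes "p > 0" and "y \<ge> 0"
  shows "((\<lambda>x. p * damped_powr (p - 1) x + damped_powr (p - 3) x) has_integral damped_powr p y) {0..y}"
proof -
  have "((\<lambda>x. p * damped_powr (p - 1) x + damped_powr (p - 3) x)
          has_integral damped_powr p y - damped_powr p 0) {0..y}"
  proof (rule fundamental_theorem_of_calculus_interior[OF assms(2)])
    show "continuous_on {0..y} (damped_powr p)"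
      using continuous_on_damped_powr[OF assms(1)] by (rule continuous_on_subset) auto
  qed (auto simp: has_real_derivative_damped_powr has_real_derivative_iff_has_vector_derivative[symmetric])
  then show ?thesis
    by simp
qed

text \<open>Every G_q is integrable near 0; the bound q > -2 is what writing
  G_q = G_(q+3)' - (q+3) G_(q+2) with G_(q+2) continuous gives.\<close>

lemma damped_powr_integrable:
  assumes "q > -2"
  shows "damped_powr q integrable_on {0..y}"
proof (cases "y \<ge> 0")
  case False
  then show ?thesis
    by (simp add: integrable_on_empty)
next
  case True
  define p where "p = q + 3"
  have "(\<lambda>x. p * damped_powr (p - 1) x + damped_powr (p - 3) x) integrable_on {0..y}"
    using has_integral_damped_powr_deriv[of p y] True assms by (auto simp: p_def)
  moreover have "continuous_on {0..y} (damped_powr (p - 1))"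
    using continuous_on_damped_powr[of "p - 1"] assms by (auto simp: p_def elim: continuous_on_subset)
  then have "(\<lambda>x. p * damped_powr (p - 1) x) integrable_on {0..y}"
    by (intro integrable_continuous_interval continuous_intros)
  ultimately have "(\<lambda>x. (p * damped_powr (p - 1) x + damped_powr (p - 3) x) - p * damped_powr (p - 1) x)
      integrable_on {0..y}"
    by (rule integrable_diff)
  then show ?thesis
    by (simp add: p_def)
qed

lemma integral_le_damped_powr:
  assumes "p > 0" and "y \<ge> 0" and "f integrable_on {0..y}"
    and "\<And>x. x \<in> {0..y} \<Longrightarrow> f x \<le> p * damped_powr (p - 1) x + damped_powr (p - 3) x"
  shows "integral {0..y} f \<le> damped_powr p y"
  using has_integral_le[OF integrable_integral[OF assms(3)] has_integral_damped_powr_deriv[OF assms(1,2)]]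
    assms(4) by blast

lemma integral_damped_powr_le_cube:
  assumes "q > -2" and "y > 0"
  shows "integral {0..y} (damped_powr q) \<le> y ^ 3 * damped_powr q y"
proof -
  have "integral {0..y} (damped_powr q) \<le> damped_powr (q + 3) y"
    using assms damped_powr_integrable[OF assms(1)]
    by (intro integral_le_damped_powr) (auto intro!: mult_nonneg_nonneg damped_powr_nonneg)
  also have "\<dots> = y ^ 3 * damped_powr q y"
    using damped_powr_add_nat[OF assms(2), of q 3] by simp
  finally show ?thesis .
qed

lemma integral_damped_powr_le_linear:
  assumes "q > -1" and "y > 0"
  shows "(q + 1) * integral {0..y} (damped_powr q) \<le> y * damped_powr q y"
proof -
  have "integral {0..y} (\<lambda>x. (q + 1) * damped_powr q x) \<le> damped_powr (q + 1) y"
    using assms damped_powr_integrable[of q y]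
    by (intro integral_le_damped_powr) (auto intro: damped_powr_nonneg)
  also have "\<dots> = y * damped_powr q y"
    using damped_powr_add_nat[OF assms(2), of q 1] by simp
  finally show ?thesis
    by simp
qed

lemma integral_damped_powr_quotient_le:
  assumes "q > -1" and "y > 0"
  shows "integral {0..y} (damped_powr q) / (y^2 * damped_powr q y) \<le> 2 * max 1 (1 / (q + 1)) / (1 + y)"
proof -
  define r where "r = integral {0..y} (damped_powr q) / (y^2 * damped_powr q y)"
  have den: "y^2 * damped_powr q y > 0"
    using assms damped_powr_pos by simp
  have r_le_y: "r \<le> y"
    using integral_damped_powr_le_cube[of q y] assms den
    by (simp add: r_def pos_divide_le_eq power2_eq_square power3_eq_cube mult_ac)
  have "(q + 1) * y * r = (q + 1) * integral {0..y} (damped_powr q) / (y * damped_powr q y)"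
    using den assms by (simp add: r_def power2_eq_square)
  also have "\<dots> \<le> 1"
    using integral_damped_powr_le_linear[OF assms] den assms damped_powr_pos[of y q]
    by (simp add: pos_divide_le_eq)
  finally have r_le_inverse: "(q + 1) * y * r \<le> 1" .
  have r_nonneg: "r \<ge> 0"
    using den damped_powr_integrable[of q y] assms
    by (auto simp: r_def intro!: divide_nonneg_pos integral_nonneg damped_powr_nonneg)
  have "r * (1 + y) \<le> 2 * max 1 (1 / (q + 1))"
  proof (cases "y \<le> 1")
    case True
    have "r * (1 + y) \<le> y * (1 + y)"
      using r_le_y assms by (intro mult_right_mono) auto
    also have "\<dots> \<le> 2"
      using True assms mult_le_one[of y y] by (simp add: distrib_left)
    finally show ?thesis
      by linarith
  next
    case False
    have "(q + 1) * (r * (1 + y)) \<le> (q + 1) * (r * (2 * y))"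
      using False assms r_nonneg by (intro mult_left_mono) auto
    also have "\<dots> = 2 * ((q + 1) * y * r)"
      by (simp add: mult_ac)
    also have "\<dots> \<le> 2"
      using r_le_inverse by simp
    finally have "r * (1 + y) \<le> 2 * (1 / (q + 1))"
      using assms by (simp add: field_simps)
    then show ?thesis
      by (meson max.cobounded2 mult_left_mono order_trans zero_le_numeral)
  qed
  then show ?thesis
    using assms by (simp add: r_def pos_le_divide_eq)
qed

text \<open>Unlike \<open>integral_norm_bound_integral\<close>, no integrability of \<open>f\<close> is needed:
  a non-integrable \<open>f\<close> has integral \<open>0\<close>.\<close>

lemma abs_integral_le_integral:
  fixes f g :: "real \<Rightarrow> real"
  assumes "g integrable_on S" and "\<And>x. x \<in> S \<Longrightarrow> \<bar>f x\<bar> \<le> g x"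
  shows "\<bar>integral S f\<bar> \<le> integral S g"
proof (cases "f integrable_on S")
  case True
  then show ?thesis
    using integral_norm_bound_integral[OF True assms(1)] assms(2) by auto
next
  case False
  have "integral S g \<ge> 0"
    by (rule integral_nonneg[OF assms(1)]) (use assms(2) in force)
  with False show ?thesis
    by (simp add: not_integrable_integral)
qed

lemma abs_integral_mult_le:
  fixes w u :: "real \<Rightarrow> real"
  assumes "w integrable_on S" and "\<And>x. x \<in> S \<Longrightarrow> w x \<ge> 0" and "\<And>x. x \<in> S \<Longrightarrow> \<bar>u x\<bar> \<le> c"
  shows "\<bar>integral S (\<lambda>x. w x * u x)\<bar> \<le> c * integral S w"
proof -
  have "\<bar>integral S (\<lambda>x. w x * u x)\<bar> \<le> integral S (\<lambda>x. w x * c)"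
    using assms by (intro abs_integral_le_integral integrable_on_mult_left)
      (auto simp: abs_mult intro: mult_left_mono)
  then show ?thesis
    by (simp add: mult.commute)
qed

lemma has_integral_one_plus_powr:
  fixes x \<delta> :: real
  assumes "x \<ge> 0" and "\<delta> > 0"
  shows "((\<lambda>y. (1 + y) powr (\<delta> - 1)) has_integral ((1 + x) powr \<delta> - 1) / \<delta>) {0..x}"
proof -
  have "((\<lambda>y. (1 + y) powr (\<delta> - 1)) has_integral
          (\<lambda>y. (1 + y) powr \<delta> / \<delta>) x - (\<lambda>y. (1 + y) powr \<delta> / \<delta>) 0) {0..x}"
  proof (rule fundamental_theorem_of_calculus_interior[OF assms(1)])
    show "continuous_on {0..x} (\<lambda>y. (1 + y) powr \<delta> / \<delta>)"
      using assms by (intro continuous_intros) auto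
    fix y assume "y \<in> {0<..<x}"
    then have "((\<lambda>y. (1 + y) powr \<delta> / \<delta>) has_real_derivative (1 + y) powr (\<delta> - 1)) (at y)"
      using assms by (auto intro!: derivative_eq_intros)
    then show "((\<lambda>y. (1 + y) powr \<delta> / \<delta>) has_vector_derivative (1 + y) powr (\<delta> - 1)) (at y)"
      by (simp add: has_real_derivative_iff_has_vector_derivative)
  qed
  then show ?thesis
    by (simp add: diff_divide_distrib)
qed

definition powr_bounded :: "real \<Rightarrow> (real \<Rightarrow> real) \<Rightarrow> bool" where
  "powr_bounded \<delta> f \<longleftrightarrow> (\<exists>C. \<forall>x\<ge>0. \<bar>f x\<bar> \<le> C * (1 + x) powr \<delta>)"

lemma powr_boundedE:
  assumes "powr_bounded \<delta> f"
  obtains C where "C \<ge> 0" and "\<And>x. x \<ge> 0 \<Longrightarrow> \<bar>f x\<bar> \<le> C * (1 + x) powr \<delta>"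
proof -
  obtain C where C: "\<And>x. x \<ge> 0 \<Longrightarrow> \<bar>f x\<bar> \<le> C * (1 + x) powr \<delta>"
    using assms by (auto simp: powr_bounded_def)
  have "\<bar>f x\<bar> \<le> max C 0 * (1 + x) powr \<delta>" if "x \<ge> 0" for x
    using C[OF that] mult_right_mono[of C "max C 0" "(1 + x) powr \<delta>"] by simp
  then show thesis
    using that[of "max C 0"] by simp
qed

lemma powr_bounded_const: "\<delta> \<ge> 0 \<Longrightarrow> powr_bounded \<delta> (\<lambda>x. c)"
  unfolding powr_bounded_def
proof (intro exI allI impI)
  fix x :: real
  assume "\<delta> \<ge> 0" "x \<ge> 0"
  then have "1 \<le> (1 + x) powr \<delta>"
    by (intro ge_one_powr_ge_zero) auto
  then show "\<bar>c\<bar> \<le> \<bar>c\<bar> * (1 + x) powr \<delta>"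
    using mult_left_mono[of 1 "(1 + x) powr \<delta>" "\<bar>c\<bar>"] by simp
qed

lemma powr_bounded_lincomb:
  assumes "powr_bounded \<delta> f" and "powr_bounded \<delta> g"
  shows "powr_bounded \<delta> (\<lambda>x. a * f x + b * g x)"
proof -
  obtain A where A: "A \<ge> 0" "\<And>x. x \<ge> 0 \<Longrightarrow> \<bar>f x\<bar> \<le> A * (1 + x) powr \<delta>"
    using assms(1) by (rule powr_boundedE) blast
  obtain A' where A': "A' \<ge> 0" "\<And>x. x \<ge> 0 \<Longrightarrow> \<bar>g x\<bar> \<le> A' * (1 + x) powr \<delta>"
    using assms(2) by (rule powr_boundedE) blast
  have "\<bar>a * f x + b * g x\<bar> \<le> (\<bar>a\<bar> * A + \<bar>b\<bar> * A') * (1 + x) powr \<delta>" if "x \<ge> 0" for x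
  proof -
    have "\<bar>a * f x + b * g x\<bar> \<le> \<bar>a\<bar> * \<bar>f x\<bar> + \<bar>b\<bar> * \<bar>g x\<bar>"
      by (simp add: abs_mult abs_triangle_ineq [THEN order_trans])
    also have "\<dots> \<le> \<bar>a\<bar> * (A * (1 + x) powr \<delta>) + \<bar>b\<bar> * (A' * (1 + x) powr \<delta>)"
      using that A A' by (intro add_mono mult_left_mono) auto
    finally show ?thesis
      by (simp add: algebra_simps)
  qed
  then show ?thesis
    unfolding powr_bounded_def by blast
qed

lemma abs_damped_powr_quotient_le:
  fixes u :: "real \<Rightarrow> real"
  assumes "q > -1" and "\<delta> \<ge> 0" and "y \<ge> 0"
    and u: "\<And>\<xi>. \<xi> \<ge> 0 \<Longrightarrow> \<bar>u \<xi>\<bar> \<le> B * (1 + \<xi>) powr \<delta>"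
  shows "\<bar>1 / (y^2 * damped_powr q y) * integral {0..y} (\<lambda>\<xi>. damped_powr q \<xi> * u \<xi>)\<bar>
           \<le> 2 * max 1 (1 / (q + 1)) * B * (1 + y) powr (\<delta> - 1)"
proof -
  have B: "B \<ge> 0"
    using u[of 0] by simp
  show ?thesis
  proof (cases "y = 0")
    case True
    with B show ?thesis
      by simp
  next
    case False
    with assms have y: "y > 0"
      by simp
    define G where "G = y^2 * damped_powr q y"
    have G: "G > 0"
      using y damped_powr_pos by (simp add: G_def)
    have "\<bar>u \<xi>\<bar> \<le> B * (1 + y) powr \<delta>" if "\<xi> \<in> {0..y}" for \<xi>
    proof -
      have "B * (1 + \<xi>) powr \<delta> \<le> B * (1 + y) powr \<delta>"
        using that assms(2) B by (intro mult_left_mono powr_mono2) auto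
      with u[of \<xi>] that show ?thesis
        by simp
    qed
    then have "\<bar>integral {0..y} (\<lambda>\<xi>. damped_powr q \<xi> * u \<xi>)\<bar>
        \<le> B * (1 + y) powr \<delta> * integral {0..y} (damped_powr q)"
      using assms damped_powr_integrable[of q y]
      by (intro abs_integral_mult_le) (auto intro: damped_powr_nonneg)
    then have "\<bar>1 / G * integral {0..y} (\<lambda>\<xi>. damped_powr q \<xi> * u \<xi>)\<bar>
        \<le> B * (1 + y) powr \<delta> * (integral {0..y} (damped_powr q) / G)"
      using G by (simp add: abs_mult divide_right_mono)
    also have "\<dots> \<le> B * (1 + y) powr \<delta> * (2 * max 1 (1 / (q + 1)) / (1 + y))"
      using integral_damped_powr_quotient_le[OF assms(1) y] B
      by (intro mult_left_mono) (auto simp: G_def)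
    also have "\<dots> = 2 * max 1 (1 / (q + 1)) * B * ((1 + y) powr \<delta> / (1 + y))"
      by simp
    also have "(1 + y) powr \<delta> / (1 + y) = (1 + y) powr (\<delta> - 1)"
      using y by (simp add: powr_diff)
    finally show ?thesis
      by (simp add: G_def)
  qed
qed

lemma powr_bounded_phi_step:
  assumes "\<alpha> < 1/2" and "\<delta> > 0" and "powr_bounded \<delta> f" and "powr_bounded \<delta> g"
  shows "powr_bounded \<delta> (phi_step \<alpha> n f g)"
proof -
  obtain B where B: "B \<ge> 0"
    and u: "\<And>\<xi>. \<xi> \<ge> 0 \<Longrightarrow> \<bar>(1 - 2*\<alpha>) * f \<xi> + real (n - 1) * g \<xi>\<bar> \<le> B * (1 + \<xi>) powr \<delta>"
    using powr_bounded_lincomb[OF assms(3,4)] by (rule powr_boundedE) blast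
  define K where "K = 2 * max 1 (1 / (2 - 4*\<alpha>))"
  have inner: "\<bar>1 / (y^2 * mw \<alpha> y) *
        integral {0..y} (\<lambda>\<xi>. mw \<alpha> \<xi> * ((1 - 2*\<alpha>) * f \<xi> + real (n - 1) * g \<xi>))\<bar>
      \<le> K * B * (1 + y) powr (\<delta> - 1)" if "y \<ge> 0" for y
    using abs_damped_powr_quotient_le[of "1 - 4*\<alpha>" \<delta> y _ B] u that assms(1,2)
    by (simp add: mw_eq_damped_powr K_def)
  have "\<bar>phi_step \<alpha> n f g x\<bar> \<le> (4 * real n * K * B / \<delta>) * (1 + x) powr \<delta>" if x: "x \<ge> 0" for x
  proof -
    have I: "((\<lambda>y. K * B * (1 + y) powr (\<delta> - 1))
        has_integral K * B * (((1 + x) powr \<delta> - 1) / \<delta>)) {0..x}"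
      using has_integral_one_plus_powr[OF x assms(2)] by (rule has_integral_mult_right)
    have "\<bar>phi_step \<alpha> n f g x\<bar> \<le> 4 * real n * integral {0..x} (\<lambda>y. K * B * (1 + y) powr (\<delta> - 1))"
      unfolding phi_step_def abs_mult abs_numeral abs_of_nat
    proof (intro mult_left_mono abs_integral_le_integral)
      show "(\<lambda>y. K * B * (1 + y) powr (\<delta> - 1)) integrable_on {0..x}"
        using I by blast
    qed (use inner in auto)
    also have "\<dots> = 4 * real n * K * B * (((1 + x) powr \<delta> - 1) / \<delta>)"
      using integral_unique[OF I] by simp
    also have "\<dots> \<le> 4 * real n * K * B * ((1 + x) powr \<delta> / \<delta>)"
      using B assms(2) by (intro mult_left_mono divide_right_mono) (auto simp: K_def)
    finally show ?thesis
      by simp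
  qed
  then show ?thesis
    unfolding powr_bounded_def by blast
qed

lemma powr_bounded_phit:
  assumes "\<alpha> < 1/2" and "\<delta> > 0"
  shows "powr_bounded \<delta> (phit \<alpha> k)"
  using assms
  by (induction \<alpha> k rule: phit.induct) (simp_all add: powr_bounded_phi_step powr_bounded_const)

lemma powr_bounded_imp_bigo:
  assumes "powr_bounded \<epsilon> f" and "\<epsilon> > 0"
  shows "f \<in> O[at_top](\<lambda>x. x powr \<epsilon>)"
proof -
  obtain C where C: "C \<ge> 0" "\<And>x. x \<ge> 0 \<Longrightarrow> \<bar>f x\<bar> \<le> C * (1 + x) powr \<epsilon>"
    using assms(1) by (rule powr_boundedE) blast
  have "\<forall>\<^sub>F x in at_top. norm (f x) \<le> C * 2 powr \<epsilon> * norm (x powr \<epsilon>)"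
    using eventually_ge_at_top[of "1::real"]
  proof eventually_elim
    case (elim x)
    have "\<bar>f x\<bar> \<le> C * (1 + x) powr \<epsilon>"
      using C elim by simp
    also have "\<dots> \<le> C * (2 * x) powr \<epsilon>"
      using elim assms(2) C by (intro mult_left_mono powr_mono2) auto
    also have "(2 * x) powr \<epsilon> = 2 powr \<epsilon> * x powr \<epsilon>"
      using elim by (simp add: powr_mult)
    finally show ?case
      by (simp add: mult.assoc)
  qed
  then show ?thesis
    by (rule bigoI)
qed

theorem mainTheorem19:
  fixes \<alpha> :: real and k :: nat and \<epsilon> :: real
  assumes "\<alpha> < 1/2" and "\<epsilon> > 0"
  shows "phit \<alpha> k \<in> O[at_top](\<lambda>x. x powr \<epsilon>)"
  using powr_bounded_imp_bigo[OF powr_bounded_phit[OF assms] assms(2)] .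

end
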